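(* Let $k=2r+1$ with $r\ge1$, $G=BS(1,k)$, and $m>0$. Let \[\mathcal{A}_m=\{a^{x_0}ta^{x_1}t\cdots a^{x_{m-1}}t\mid x_i\in\mathbb{Z},\ |x_i|\le r\}\setminus\{(a^{-r}t)^m\}.\] Then two words in $\mathcal{A}_m$ represent conjugate elements of $G$ if and only if they are cyclic permutations of each other, and every word in $\mathcal{A}_m$ is a conjugacy geodesic.
   Context: $BS(1,k)=\langle a,t\mid tat^{-1}=a^k\rangle$. $a^x$ denotes $|x|$ copies of $a$ or $a^{-1}$ according to the sign of $x$. Word length is with respect to $\{a,t\}$. A word is a conjugacy geodesic for the conjugacy class of the element it represents if it is a geodesic word and the element it represents has minimal length among all elements of its conjugacy class. *)

theory Defs
  imports Main
begin

(* Generators of BS(1,k) = < a, t | t a t^-1 = a^k >. A letter is a generator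
   together with a flag: False = the generator itself, True = its inverse. *)
datatype gen = A | T

type_synonym letter = "gen \<times> bool"
type_synonym word = "letter list"

definition inv_letter :: "letter \<Rightarrow> letter" where
  "inv_letter x = (fst x, \<not> snd x)"

definition inv_word :: "word \<Rightarrow> word" where
  "inv_word w = rev (map inv_letter w)"

inductive bs_eq :: "nat \<Rightarrow> word \<Rightarrow> word \<Rightarrow> bool" for k :: nat where
  bs_refl: "bs_eq k w w"
| bs_sym: "bs_eq k u v \<Longrightarrow> bs_eq k v u"
| bs_trans: "bs_eq k u v \<Longrightarrow> bs_eq k v w \<Longrightarrow> bs_eq k u w"
| bs_cancel: "bs_eq k (u @ [x, inv_letter x] @ v) (u @ v)"
| bs_rel: "bs_eq k (u @ [(T,False), (A,False), (T,True)] @ v) (u @ replicate k (A,False) @ v)"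

definition elt_length :: "nat \<Rightarrow> word \<Rightarrow> nat" where
  "elt_length k w = (LEAST n. \<exists>w'. bs_eq k w w' \<and> length w' = n)"

definition geodesic :: "nat \<Rightarrow> word \<Rightarrow> bool" where
  "geodesic k w \<longleftrightarrow> length w = elt_length k w"

definition bs_conj :: "nat \<Rightarrow> word \<Rightarrow> word \<Rightarrow> bool" where
  "bs_conj k u v \<longleftrightarrow> (\<exists>g. bs_eq k (g @ u @ inv_word g) v)"

definition conj_geodesic :: "nat \<Rightarrow> word \<Rightarrow> bool" where
  "conj_geodesic k w \<longleftrightarrow> geodesic k w \<and>
     (\<forall>v. bs_conj k w v \<longrightarrow> elt_length k w \<le> elt_length k v)"

definition apow :: "int \<Rightarrow> word" where
  "apow x = replicate (nat \<bar>x\<bar>) (A, x < 0)"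

definition blockword :: "int list \<Rightarrow> word" where
  "blockword xs = concat (map (\<lambda>x. apow x @ [(T, False)]) xs)"

definition A_set :: "nat \<Rightarrow> nat \<Rightarrow> word set" where
  "A_set r m = {blockword xs | xs. length xs = m \<and> (\<forall>x\<in>set xs. \<bar>x\<bar> \<le> int r)}
               - {blockword (replicate m (- int r))}"

end

theory Submission
  imports Defs "HOL-Number_Theory.Cong"
begin

(* Sending a to (1, 0) and t to (0, 1) defines a homomorphism from BS(1,k) to the semidirect
   product Z/(k^m - 1) x Z in which t acts by multiplication by k, a unit of order m. The block
   word with digits x_0, ..., x_(m-1) has t-exponent m and first coordinate sum x_i k^i, and
   conjugating it multiplies that coordinate by a power of k, which modulo k^m - 1 is the same as
   rotating the digit string.
   A word v conjugate to it has t-exponent m, and collecting the a-letters of v by height modulo m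
   gives a digit vector z with sum z_i k^i congruent to the value of a rotation of x and with
   length v >= m + sum |z_i|. Balanced digits |x_i| <= r minimise sum |z_i| within such a
   congruence class, which makes the block word a conjugacy geodesic. Finally, apart from
   (-r, ..., -r), balanced strings of length m have pairwise incongruent values modulo k^m - 1,
   so conjugate block words come from digit strings that are rotations of each other. *)

section \<open>Arithmetic of exponents modulo m\<close>

lemma cong_power_modulus: "[(K::int) ^ m = 1] (mod K ^ m - 1)"
  by (simp add: cong_iff_dvd_diff)

lemma power_cong_mod_exponent:
  fixes K :: int
  assumes "i mod m = j mod m"
  shows "[K ^ i = K ^ j] (mod K ^ m - 1)"
proof -
  have reduce: "[K ^ n = K ^ (n mod m)] (mod K ^ m - 1)" for n
  proof -
    have "[K ^ (n mod m) * (K ^ m) ^ (n div m) = K ^ (n mod m) * 1 ^ (n div m)] (mod K ^ m - 1)"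
      by (intro cong_scalar_left cong_pow cong_power_modulus)
    moreover have "K ^ n = K ^ (n mod m) * (K ^ m) ^ (n div m)"
      by (metis mod_div_mult_eq power_add power_mult mult.commute)
    ultimately show ?thesis by simp
  qed
  show ?thesis
    using reduce[of i] reduce[of j] assms by (metis cong_sym cong_trans)
qed

lemma power_nat_mod_cong:
  fixes K :: int
  assumes "m > 0" and "int n mod int m = h mod int m"
  shows "[K ^ nat (h mod int m) = K ^ n] (mod K ^ m - 1)"
proof (rule power_cong_mod_exponent)
  have "int (nat (h mod int m) mod m) = int (n mod m)"
    using assms by (simp add: zmod_int)
  then show "nat (h mod int m) mod m = n mod m" by (simp only: of_nat_eq_iff)
qed

section \<open>Invariants of words\<close>

fun t_exp :: "word \<Rightarrow> int" where
  "t_exp [] = 0"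
| "t_exp ((A, _) # w) = t_exp w"
| "t_exp ((T, b) # w) = (if b then -1 else 1) + t_exp w"

(* Starting at height h, an a-letter read at height h' contributes +-K^(h' mod m); modulo K^m - 1
   this is the first coordinate of the homomorphism to Z/(K^m - 1) x Z described above. *)
fun cyc_value :: "int \<Rightarrow> nat \<Rightarrow> int \<Rightarrow> word \<Rightarrow> int" where
  "cyc_value K m h [] = 0"
| "cyc_value K m h ((A, b) # w) = (if b then -1 else 1) * K ^ nat (h mod int m) + cyc_value K m h w"
| "cyc_value K m h ((T, b) # w) = cyc_value K m (if b then h - 1 else h + 1) w"

lemma t_exp_append [simp]: "t_exp (u @ v) = t_exp u + t_exp v"
  by (induction u rule: t_exp.induct) auto

lemma cyc_value_append:
  "cyc_value K m h (u @ v) = cyc_value K m h u + cyc_value K m (h + t_exp u) v"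
  by (induction K m h u rule: cyc_value.induct) (auto simp: algebra_simps)

lemma t_exp_replicate_A [simp]: "t_exp (replicate n (A, b)) = 0"
  by (induction n) auto

lemma cyc_value_replicate_A:
  "cyc_value K m h (replicate n (A, b)) = int n * (if b then -1 else 1) * K ^ nat (h mod int m)"
  by (induction n) (auto simp: algebra_simps)

lemma t_exp_cancel [simp]: "t_exp (x # inv_letter x # v) = t_exp v"
  by (cases x rule: prod.exhaust, rename_tac g b, case_tac g) (auto simp: inv_letter_def)

lemma cyc_value_cancel [simp]: "cyc_value K m h (x # inv_letter x # v) = cyc_value K m h v"
  by (cases x rule: prod.exhaust, rename_tac g b, case_tac g) (auto simp: inv_letter_def)

lemma cyc_value_add_period: "cyc_value K m (h + int m) w = cyc_value K m h w"
  by (induction K m h w rule: cyc_value.induct) (auto simp: algebra_simps)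

lemma cyc_value_shift:
  assumes "m > 0"
  shows "[cyc_value K m (h + d) w = K ^ nat (d mod int m) * cyc_value K m h w] (mod K ^ m - 1)"
proof (induction w arbitrary: h)
  case Nil
  then show ?case by simp
next
  case (Cons x w)
  obtain g b where x: "x = (g, b)" by fastforce
  show ?case
  proof (cases g)
    case A
    have "[K ^ nat ((h + d) mod int m) = K ^ (nat (d mod int m) + nat (h mod int m))] (mod K ^ m - 1)"
      using assms by (intro power_nat_mod_cong) (simp_all add: mod_add_eq add.commute)
    then have "[(if b then -1 else 1) * K ^ nat ((h + d) mod int m) + cyc_value K m (h + d) w
        = (if b then -1 else 1) * K ^ (nat (d mod int m) + nat (h mod int m))
          + K ^ nat (d mod int m) * cyc_value K m h w] (mod K ^ m - 1)"
      by (intro cong_add cong_scalar_left Cons)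
    then show ?thesis using x A by (simp add: algebra_simps power_add)
  next
    case T
    then show ?thesis using x Cons[of "h - 1"] Cons[of "h + 1"] by (auto simp: algebra_simps)
  qed
qed

lemma bs_eq_t_exp: "bs_eq k u v \<Longrightarrow> t_exp u = t_exp v"
  by (induction rule: bs_eq.induct) simp_all

lemma bs_eq_cyc_value:
  assumes "bs_eq k u v" and "m > 0"
  shows "[cyc_value (int k) m h u = cyc_value (int k) m h v] (mod int k ^ m - 1)"
  using assms(1)
proof (induction rule: bs_eq.induct)
  case (bs_sym u v)
  then show ?case by (simp add: cong_sym_eq)
next
  case (bs_trans u v w)
  then show ?case by (blast intro: cong_trans)
next
  case (bs_cancel u x v)
  then show ?case by (simp add: cyc_value_append)
next
  case (bs_rel u v)
  let ?h = "h + t_exp u"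
  \<comment> \<open>both sides of the relator contribute k^(h+1), up to reducing the exponent mod m\<close>
  have "[int k ^ nat ((?h + 1) mod int m) = int k ^ Suc (nat (?h mod int m))] (mod int k ^ m - 1)"
    using assms(2) by (intro power_nat_mod_cong) (simp_all add: mod_add_right_eq ac_simps)
  then show ?case
    by (simp add: cyc_value_append cyc_value_replicate_A cong_add cong_add_rcancel cong_add_lcancel)
qed simp

lemma inv_word_Nil [simp]: "inv_word [] = []"
  by (simp add: inv_word_def)

lemma inv_word_Cons: "inv_word (x # g) = inv_word g @ [inv_letter x]"
  by (simp add: inv_word_def)

lemma inv_word_inv_word [simp]: "inv_word (inv_word g) = g"
  by (simp add: inv_word_def rev_map comp_def inv_letter_def)

lemma t_exp_inv_word: "t_exp (inv_word g) = - t_exp g"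
  by (induction g rule: t_exp.induct) (auto simp: inv_word_Cons inv_letter_def)

lemma cyc_value_inv_word: "cyc_value K m h (inv_word g) = - cyc_value K m (h - t_exp g) g"
  by (induction g arbitrary: h rule: t_exp.induct)
    (auto simp: inv_word_Cons inv_letter_def cyc_value_append t_exp_inv_word algebra_simps)

lemma cyc_value_conj:
  assumes "m > 0" and "t_exp u = int m"
  shows "[cyc_value K m 0 (g @ u @ inv_word g) = K ^ nat (t_exp g mod int m) * cyc_value K m 0 u]
    (mod K ^ m - 1)"
proof -
  have "cyc_value K m 0 (g @ u @ inv_word g) = cyc_value K m (0 + t_exp g) u"
    using assms(2) cyc_value_add_period[of K m 0 g]
    by (simp add: cyc_value_append cyc_value_inv_word)
  then show ?thesis
    using cyc_value_shift[OF assms(1), of K 0 "t_exp g" u] by simp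
qed

lemma bs_cancel_inv_word: "bs_eq k (inv_word p @ p @ s) s"
proof (induction p)
  case Nil
  then show ?case by (simp add: bs_refl)
next
  case (Cons x p)
  have "bs_eq k (inv_word p @ [inv_letter x, inv_letter (inv_letter x)] @ p @ s) (inv_word p @ p @ s)"
    by (rule bs_cancel)
  then show ?case
    using Cons by (auto simp: inv_word_Cons inv_letter_def intro: bs_trans)
qed

lemma bs_conj_rotate: "bs_conj k u (rotate n u)"
proof -
  define P D where "P = take (n mod length u) u" and "D = drop (n mod length u) u"
  have "u = P @ D" and "rotate n u = D @ P"
    by (simp_all add: P_def D_def rotate_drop_take)
  moreover have "bs_eq k (inv_word P @ P @ D @ P) (D @ P)"
    by (rule bs_cancel_inv_word)
  ultimately have "bs_eq k (inv_word P @ u @ inv_word (inv_word P)) (rotate n u)"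
    by simp
  then show ?thesis
    unfolding bs_conj_def by blast
qed

lemma bs_conj_bs_eq_trans: "bs_conj k w v \<Longrightarrow> bs_eq k v v' \<Longrightarrow> bs_conj k w v'"
  unfolding bs_conj_def by (auto intro: bs_trans)

lemma elt_length_attained: "\<exists>w'. bs_eq k w w' \<and> length w' = elt_length k w"
  unfolding elt_length_def by (rule LeastI_ex) (use bs_refl in blast)

lemma conj_geodesicI:
  assumes "\<And>v. bs_conj k w v \<Longrightarrow> length w \<le> length v"
  shows "conj_geodesic k w"
proof -
  have conj_self: "bs_conj k w w"
    using bs_conj_rotate[of k w 0] by simp
  have "elt_length k w = length w"
    unfolding elt_length_def
  proof (rule Least_equality)
    show "\<exists>w'. bs_eq k w w' \<and> length w' = length w"
      using bs_refl by blast
  next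
    fix n assume "\<exists>w'. bs_eq k w w' \<and> length w' = n"
    then show "length w \<le> n"
      using assms bs_conj_bs_eq_trans[OF conj_self] by blast
  qed
  moreover have "length w \<le> elt_length k v" if "bs_conj k w v" for v
    using elt_length_attained[of k v] assms bs_conj_bs_eq_trans[OF that] by metis
  ultimately show ?thesis
    unfolding conj_geodesic_def geodesic_def by simp
qed

section \<open>Digit vectors\<close>

abbreviation base_value :: "int \<Rightarrow> int list \<Rightarrow> int" where
  "base_value K xs \<equiv> horner_sum (\<lambda>x. x) K xs"

definition weight :: "int list \<Rightarrow> int" where
  "weight xs = (\<Sum>x\<leftarrow>xs. \<bar>x\<bar>)"

lemma weight_Nil [simp]: "weight [] = 0"
  and weight_Cons [simp]: "weight (x # xs) = \<bar>x\<bar> + weight xs"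
  and weight_append [simp]: "weight (xs @ ys) = weight xs + weight ys"
  by (simp_all add: weight_def)

lemma weight_nonneg: "weight xs \<ge> 0"
  by (induction xs) auto

lemma weight_rotate [simp]: "weight (rotate n xs) = weight xs"
  by (metis rotate_drop_take weight_append append_take_drop_id add.commute)

lemma weight_concat_replicate: "weight (concat (replicate L xs)) = int L * weight xs"
  by (induction L) (auto simp: algebra_simps)

lemma weight_update_le: "i < length xs \<Longrightarrow> weight (xs[i := xs ! i + s]) \<le> weight xs + \<bar>s\<bar>"
  by (induction xs arbitrary: i) (auto split: nat.split)

lemma base_value_update:
  fixes K :: int
  shows "i < length xs \<Longrightarrow> base_value K (xs[i := xs ! i + s]) = base_value K xs + s * K ^ i"
  by (induction xs arbitrary: i) (auto simp: algebra_simps split: nat.split)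

(* z ! i is the exponent sum of the a-letters of w at heights congruent to i modulo m *)
lemma cyc_value_digits:
  assumes "m > 0"
  shows "\<exists>z. length z = m \<and> base_value K z = cyc_value K m h w
    \<and> \<bar>t_exp w\<bar> + weight z \<le> int (length w)"
proof (induction w arbitrary: h)
  case Nil
  show ?case
    by (rule exI[of _ "replicate m 0"]) (simp add: weight_def horner_sum_eq_sum sum_list_replicate)
next
  case (Cons x w)
  obtain g b where x: "x = (g, b)" by fastforce
  show ?case
  proof (cases g)
    case A
    define i where "i = nat (h mod int m)"
    define s :: int where "s = (if b then -1 else 1)"
    obtain z where z: "length z = m" "base_value K z = cyc_value K m h w"
      "\<bar>t_exp w\<bar> + weight z \<le> int (length w)"
      using Cons[of h] by blast
    have i: "i < length z"
      using assms z(1) by (simp add: i_def nat_less_iff)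
    let ?z = "z[i := z ! i + s]"
    have "base_value K ?z = cyc_value K m h (x # w)"
      using x A z(2) base_value_update[OF i, of K s] by (simp add: i_def s_def)
    moreover have "\<bar>t_exp (x # w)\<bar> + weight ?z \<le> int (length (x # w))"
      using x A z(3) weight_update_le[OF i, of s] by (cases b) (simp_all add: s_def)
    ultimately show ?thesis
      using z(1) by (intro exI[of _ ?z]) simp
  next
    case T
    then show ?thesis
      using x Cons[of "h - 1"] Cons[of "h + 1"] by (cases b) force+
  qed
qed

lemma base_value_rotate_cong:
  fixes K :: int
  assumes "length xs = m"
  shows "[K ^ j * base_value K (rotate j xs) = base_value K xs] (mod K ^ m - 1)"
proof (induction j)
  case 0
  then show ?case by simp
next
  case (Suc j)
  have rotate1: "[K * base_value K (rotate1 ys) = base_value K ys] (mod K ^ m - 1)"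
    if "length ys = m" for ys
  proof (cases ys)
    case (Cons y l)
    have "[K * base_value K l + K ^ m * y = K * base_value K l + 1 * y] (mod K ^ m - 1)"
      by (intro cong_add cong_scalar_right cong_power_modulus cong_refl)
    moreover have "m = Suc (length l)"
      using Cons that by simp
    ultimately show ?thesis
      using Cons by (simp add: horner_sum_append algebra_simps)
  qed (use that in simp)
  have "[K ^ j * (K * base_value K (rotate1 (rotate j xs))) = K ^ j * base_value K (rotate j xs)]
      (mod K ^ m - 1)"
    using assms by (intro cong_scalar_left rotate1) simp
  then have "[K ^ Suc j * base_value K (rotate (Suc j) xs) = K ^ j * base_value K (rotate j xs)]
      (mod K ^ m - 1)"
    by (simp add: ac_simps)
  then show ?case
    using Suc.IH by (rule cong_trans)
qed

section \<open>Balanced expansions in base 2r+1\<close>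

definition balanced :: "nat \<Rightarrow> int list \<Rightarrow> bool" where
  "balanced r xs \<longleftrightarrow> (\<forall>x\<in>set xs. \<bar>x\<bar> \<le> int r)"

lemma abs_add_carry_ge:
  fixes x c :: int
  assumes "\<bar>x\<bar> \<le> int r" and "K = 2 * int r + 1"
  shows "\<bar>x\<bar> + \<bar>c\<bar> \<le> \<bar>x + K * c\<bar>"
proof (cases "c = 0")
  case False
  then have "int r * 1 \<le> int r * \<bar>c\<bar>"
    by (intro mult_left_mono) auto
  moreover have "\<bar>K * c\<bar> = K * \<bar>c\<bar>"
    using assms(2) by (simp add: abs_mult)
  moreover have "K * \<bar>c\<bar> = 2 * (int r * \<bar>c\<bar>) + \<bar>c\<bar>"
    using assms(2) by (simp add: algebra_simps)
  ultimately show ?thesis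
    using assms(1) by linarith
qed simp

(* The carry c is pushed one digit up at each step of the induction. *)
lemma balanced_weight_le:
  assumes "balanced r x" and "K = 2 * int r + 1"
    and "base_value K z + c = base_value K x"
  shows "weight x \<le> weight z + \<bar>c\<bar>"
  using assms(1,3)
proof (induction x arbitrary: z c)
  case Nil
  then show ?case by (simp add: weight_nonneg)
next
  case (Cons x0 xs)
  obtain z0 zs where z: "base_value K z = z0 + K * base_value K zs" "weight z = \<bar>z0\<bar> + weight zs"
    by (cases z) (auto intro: that[of 0 "[]"])
  have x0: "\<bar>x0\<bar> \<le> int r" and xs: "balanced r xs"
    using Cons.prems(1) by (auto simp: balanced_def)
  have eq: "z0 + c - x0 = K * (base_value K xs - base_value K zs)"
    using Cons.prems(2) z(1) by (simp add: algebra_simps)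
  define c' where "c' = base_value K xs - base_value K zs"
  have "weight xs \<le> weight zs + \<bar>c'\<bar>"
    using Cons.IH[OF xs] by (simp add: c'_def)
  moreover have "\<bar>x0\<bar> + \<bar>c'\<bar> \<le> \<bar>z0 + c\<bar>"
    using abs_add_carry_ge[OF x0 assms(2), of c'] eq by (simp add: c'_def algebra_simps)
  ultimately show ?case
    using z(2) by simp
qed

lemma base_value_concat_replicate_diff:
  fixes K :: int
  assumes "length z = m" and "length x = m"
    and "base_value K z - base_value K x = q * (K ^ m - 1)"
  shows "base_value K (concat (replicate L z)) - base_value K (concat (replicate L x))
    = q * (K ^ (L * m) - 1)"
proof (induction L)
  case (Suc L)
  have "base_value K (concat (replicate (Suc L) z)) - base_value K (concat (replicate (Suc L) x))
      = (base_value K z - base_value K x)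
        + K ^ m * (base_value K (concat (replicate L z)) - base_value K (concat (replicate L x)))"
    using assms by (simp add: horner_sum_append algebra_simps)
  also have "\<dots> = q * (K ^ m - 1) + K ^ m * (q * (K ^ (L * m) - 1))"
    using Suc assms(3) by simp
  also have "\<dots> = q * (K ^ (Suc L * m) - 1)"
    by (simp add: algebra_simps power_add)
  finally show ?case .
qed simp

(* A weight comparison modulo K^m - 1 is reduced to an exact one by repeating both digit strings
   L times: the discrepancy q (K^(L m) - 1) is absorbed by a single digit -q and a carry q, which
   cost 2|q| in weight, i.e. less than 1 per copy once L > 2|q|. *)
lemma balanced_weight_le_cong:
  assumes "balanced r x" and "K = 2 * int r + 1" and "length x = m" and "length z = m"
    and "[base_value K z = base_value K x] (mod K ^ m - 1)"
  shows "weight x \<le> weight z"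
proof -
  obtain q where q: "base_value K z - base_value K x = q * (K ^ m - 1)"
    using assms(5) by (metis cong_iff_dvd_diff dvdE mult.commute)
  define L where "L = Suc (nat (2 * \<bar>q\<bar>))"
  define Z where "Z = concat (replicate L z)"
  define X where "X = concat (replicate L x)"
  have "base_value K Z - base_value K X = q * (K ^ length Z - 1)"
    using base_value_concat_replicate_diff[OF assms(4,3) q, of L] assms(4)
    by (simp add: Z_def X_def length_concat sum_list_replicate)
  then have "base_value K (Z @ [- q]) + q = base_value K X"
    by (simp add: horner_sum_append algebra_simps)
  moreover have "balanced r X"
    using assms(1) by (simp add: X_def balanced_def)
  ultimately have "weight X \<le> weight (Z @ [- q]) + \<bar>q\<bar>"
    using assms(2) balanced_weight_le by blast
  then have "int L * weight x < int L * (weight z + 1)"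
    by (simp add: X_def Z_def weight_concat_replicate L_def algebra_simps)
  then show ?thesis
    by (simp add: mult_less_cancel_left)
qed

lemma balanced_base_value_abs_le:
  assumes "balanced r x" and "K = 2 * int r + 1"
  shows "\<bar>2 * base_value K x\<bar> \<le> K ^ length x - 1"
  using assms(1)
proof (induction x)
  case (Cons a l)
  then have "\<bar>2 * a\<bar> \<le> 2 * int r" and "\<bar>K * (2 * base_value K l)\<bar> \<le> K * (K ^ length l - 1)"
    using assms(2) by (auto simp: balanced_def abs_mult intro: mult_left_mono)
  then show ?case
    using assms(2) by (simp add: algebra_simps)
qed simp

lemma balanced_base_value_gt:
  assumes "balanced r x" and "K = 2 * int r + 1" and "x \<noteq> replicate (length x) (- int r)"
  shows "- (K ^ length x - 1) < 2 * base_value K x"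
  using assms(1,3)
proof (induction x)
  case (Cons a l)
  have a: "\<bar>a\<bar> \<le> int r" and l: "balanced r l"
    using Cons.prems(1) by (auto simp: balanced_def)
  have "- (K ^ length l - 1) + (if a = - int r then 1 else 0) \<le> 2 * base_value K l"
    using Cons.IH[OF l] Cons.prems(2) balanced_base_value_abs_le[OF l assms(2)] by auto
  then have "K * (- (K ^ length l - 1) + (if a = - int r then 1 else 0)) \<le> K * (2 * base_value K l)"
    using assms(2) by (intro mult_left_mono) auto
  then show ?case
    using a assms(2) by (auto simp: algebra_simps split: if_splits)
qed simp

lemma balanced_base_value_inj:
  assumes "balanced r x" and "balanced r y" and "K = 2 * int r + 1"
    and "length x = length y" and "base_value K x = base_value K y"
  shows "x = y"
  using assms(1,2,4,5)
proof (induction x arbitrary: y)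
  case (Cons a l)
  then obtain b l' where y: "y = b # l'"
    by (cases y) auto
  have ab: "\<bar>a\<bar> \<le> int r" "\<bar>b\<bar> \<le> int r" and l: "balanced r l" "balanced r l'"
    using Cons.prems(1,2) y by (auto simp: balanced_def)
  define d where "d = base_value K l' - base_value K l"
  have eq: "a - b = K * d"
    using Cons.prems(4) y by (simp add: d_def algebra_simps)
  \<comment> \<open>a - b is a multiple of K of absolute value at most 2r < K\<close>
  have "d = 0"
  proof (rule ccontr)
    assume "d \<noteq> 0"
    then have "K * 1 \<le> K * \<bar>d\<bar>"
      using assms(3) by (intro mult_left_mono) (simp_all add: int_one_le_iff_zero_less)
    then have "K \<le> \<bar>a - b\<bar>"
      using eq assms(3) by (simp add: abs_mult)
    then show False
      using ab assms(3) by linarith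
  qed
  then show ?case
    using Cons.IH[OF l] Cons.prems(3,4) eq y assms(3) by (simp add: d_def)
qed simp

(* Twice the value of a balanced string other than (-r, ..., -r) lies in (-(K^n - 1), K^n - 1]. *)
lemma balanced_cong_eq:
  assumes "balanced r x" and "balanced r y" and "K = 2 * int r + 1"
    and "length x = n" and "length y = n"
    and "x \<noteq> replicate n (- int r)" and "y \<noteq> replicate n (- int r)"
    and "[base_value K x = base_value K y] (mod K ^ n - 1)"
  shows "x = y"
proof -
  obtain c where c: "base_value K x - base_value K y = (K ^ n - 1) * c"
    using assms(8) by (auto simp: cong_iff_dvd_diff)
  have bounds: "- (K ^ n - 1) < 2 * base_value K v" "2 * base_value K v \<le> K ^ n - 1"
    if "balanced r v" "length v = n" "v \<noteq> replicate n (- int r)" for v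
    using balanced_base_value_gt[OF that(1) assms(3)] balanced_base_value_abs_le[OF that(1) assms(3)]
      that(2,3) by auto
  have "c = 0"
  proof (rule ccontr)
    assume "c \<noteq> 0"
    moreover have "K ^ n - 1 \<ge> 0"
      using assms(3) by simp
    ultimately have "(K ^ n - 1) * 1 \<le> (K ^ n - 1) * \<bar>c\<bar>"
      by (intro mult_left_mono) (simp_all add: int_one_le_iff_zero_less)
    then have "K ^ n - 1 \<le> \<bar>(K ^ n - 1) * c\<bar>"
      using \<open>K ^ n - 1 \<ge> 0\<close> by (simp add: abs_mult)
    then show False
      using c bounds[OF assms(1,4,6)] bounds[OF assms(2,5,7)] by linarith
  qed
  then show ?thesis
    using c balanced_base_value_inj[OF assms(1-3)] assms(4,5) by simp
qed

lemma blockword_Nil [simp]: "blockword [] = []"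
  by (simp add: blockword_def)

lemma blockword_Cons [simp]: "blockword (x # xs) = apow x @ (T, False) # blockword xs"
  by (simp add: blockword_def)

lemma blockword_append: "blockword (xs @ ys) = blockword xs @ blockword ys"
  by (simp add: blockword_def)

lemma t_exp_blockword: "t_exp (blockword xs) = int (length xs)"
  by (induction xs) (auto simp: apow_def)

lemma length_blockword: "int (length (blockword xs)) = int (length xs) + weight xs"
  by (induction xs) (auto simp: apow_def)

lemma cyc_value_blockword:
  "i + length xs \<le> m \<Longrightarrow> cyc_value K m (int i) (blockword xs) = K ^ i * base_value K xs"
proof (induction xs arbitrary: i)
  case (Cons x xs)
  have "int i mod int m = int i"
    using Cons.prems by simp
  then have "cyc_value K m (int i) (blockword (x # xs))
      = x * K ^ i + cyc_value K m (int (Suc i)) (blockword xs)"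
    by (simp add: cyc_value_append apow_def cyc_value_replicate_A t_exp_blockword add.commute)
  then show ?case
    using Cons.IH[of "Suc i"] Cons.prems by (simp add: algebra_simps)
qed simp

lemma blockword_rotate: "\<exists>n. blockword (rotate j xs) = rotate n (blockword xs)"
proof -
  define d where "d = j mod length xs"
  have "blockword (rotate j xs) = blockword (drop d xs) @ blockword (take d xs)"
    by (simp add: rotate_drop_take d_def blockword_append)
  also have "\<dots> = rotate (length (blockword (take d xs))) (blockword xs)"
    by (metis append_take_drop_id blockword_append rotate_append)
  finally show ?thesis by blast
qed

section \<open>Conjugates of block words\<close>

lemma bs_conj_blockword_cong:
  assumes "bs_conj k (blockword xs) v" and "length xs = m" and "m > 0"
  obtains j where "t_exp v = int m"
    and "[cyc_value (int k) m 0 v = base_value (int k) (rotate j xs)] (mod int k ^ m - 1)"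
proof -
  let ?K = "int k" and ?w = "blockword xs"
  obtain g where g: "bs_eq k (g @ ?w @ inv_word g) v"
    using assms(1) by (auto simp: bs_conj_def)
  have t_exp_w: "t_exp ?w = int m"
    using assms(2) by (simp add: t_exp_blockword)
  define d where "d = nat (t_exp g mod int m)"
  define j where "j = m - d"
  have "d < m"
    using assms(3) by (simp add: d_def nat_less_iff)
  then have dj: "d + j = m"
    by (simp add: j_def)
  have "[cyc_value ?K m 0 v = cyc_value ?K m 0 (g @ ?w @ inv_word g)] (mod ?K ^ m - 1)"
    using bs_eq_cyc_value[OF g assms(3)] by (rule cong_sym)
  also have "[cyc_value ?K m 0 (g @ ?w @ inv_word g) = ?K ^ d * cyc_value ?K m 0 ?w] (mod ?K ^ m - 1)"
    unfolding d_def using assms(3) t_exp_w by (rule cyc_value_conj)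
  also have "cyc_value ?K m 0 ?w = base_value ?K xs"
    using cyc_value_blockword[of 0 xs m ?K] assms(2) by simp
  also have "[?K ^ d * base_value ?K xs = ?K ^ d * (?K ^ j * base_value ?K (rotate j xs))]
      (mod ?K ^ m - 1)"
    using base_value_rotate_cong[OF assms(2)] by (intro cong_scalar_left) (rule cong_sym)
  also have "?K ^ d * (?K ^ j * base_value ?K (rotate j xs)) = ?K ^ m * base_value ?K (rotate j xs)"
    by (simp flip: dj add: power_add)
  also have "[?K ^ m * base_value ?K (rotate j xs) = 1 * base_value ?K (rotate j xs)] (mod ?K ^ m - 1)"
    by (intro cong_scalar_right cong_power_modulus)
  finally show ?thesis
    using that bs_eq_t_exp[OF g] t_exp_w by (simp add: t_exp_inv_word)
qed

lemma length_ge_conj_blockword: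
  assumes "bs_conj k (blockword xs) v" and "balanced r xs" and "k = 2 * r + 1" and "xs \<noteq> []"
  shows "length (blockword xs) \<le> length v"
proof -
  let ?K = "int k" and ?m = "length xs"
  obtain j where t_exp_v: "t_exp v = int ?m"
    and cong: "[cyc_value ?K ?m 0 v = base_value ?K (rotate j xs)] (mod ?K ^ ?m - 1)"
    using bs_conj_blockword_cong[OF assms(1) refl] assms(4) by blast
  obtain z where z: "length z = ?m" "base_value ?K z = cyc_value ?K ?m 0 v"
    "\<bar>t_exp v\<bar> + weight z \<le> int (length v)"
    using cyc_value_digits[of ?m] assms(4) by blast
  have "weight (rotate j xs) \<le> weight z"
    using assms(2,3) z(1,2) cong
    by (intro balanced_weight_le_cong[of r _ ?K ?m]) (auto simp: balanced_def)
  then show ?thesis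
    using z(3) t_exp_v length_blockword[of xs] by simp
qed

lemma conj_geodesic_blockword:
  assumes "balanced r xs" and "k = 2 * r + 1" and "xs \<noteq> []"
  shows "conj_geodesic k (blockword xs)"
  using length_ge_conj_blockword[OF _ assms] by (rule conj_geodesicI)

lemma bs_conj_blockword_imp_rotate:
  assumes "bs_conj k (blockword xs) (blockword ys)" and "k = 2 * r + 1"
    and "balanced r xs" and "balanced r ys" and "length xs = m" and "length ys = m" and "m > 0"
    and "xs \<noteq> replicate m (- int r)" and "ys \<noteq> replicate m (- int r)"
  shows "\<exists>j. ys = rotate j xs"
proof -
  let ?K = "int k"
  obtain j where "[cyc_value ?K m 0 (blockword ys) = base_value ?K (rotate j xs)] (mod ?K ^ m - 1)"
    using bs_conj_blockword_cong[OF assms(1,5,7)] by blast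
  moreover have "cyc_value ?K m 0 (blockword ys) = base_value ?K ys"
    using cyc_value_blockword[of 0 ys m ?K] assms(6) by simp
  moreover have "rotate j xs \<noteq> replicate m (- int r)"
    using assms(5,8) by (metis replicate_eqI set_rotate in_set_replicate)
  ultimately have "ys = rotate j xs"
    using assms(2-6,9)
    by (intro balanced_cong_eq[of r _ _ ?K m]) (auto simp: balanced_def)
  then show ?thesis by blast
qed

lemma A_setE:
  assumes "w \<in> A_set r m"
  obtains xs where "w = blockword xs" and "length xs = m" and "balanced r xs"
    and "xs \<noteq> replicate m (- int r)"
proof -
  from assms obtain xs where "w = blockword xs" "length xs = m" "\<forall>x\<in>set xs. \<bar>x\<bar> \<le> int r"
    and "w \<noteq> blockword (replicate m (- int r))"
    unfolding A_set_def by blast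
  then show ?thesis
    by (intro that) (auto simp: balanced_def)
qed

theorem lemma4p4:
  fixes r k m :: nat
  assumes "r \<ge> 1" and "k = 2 * r + 1" and "m > 0"
  shows "(\<forall>u\<in>A_set r m. \<forall>v\<in>A_set r m. bs_conj k u v \<longleftrightarrow> (\<exists>n. rotate n u = v))
         \<and> (\<forall>w\<in>A_set r m. conj_geodesic k w)"
proof (intro conjI ballI iffI)
  fix u v assume "u \<in> A_set r m" "v \<in> A_set r m" and conj: "bs_conj k u v"
  obtain xs where xs: "u = blockword xs" "length xs = m" "balanced r xs" "xs \<noteq> replicate m (- int r)"
    using \<open>u \<in> A_set r m\<close> by (rule A_setE)
  obtain ys where ys: "v = blockword ys" "length ys = m" "balanced r ys" "ys \<noteq> replicate m (- int r)"
    using \<open>v \<in> A_set r m\<close> by (rule A_setE)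
  obtain j where "ys = rotate j xs"
    using bs_conj_blockword_imp_rotate[OF _ assms(2)] conj xs ys assms(3) by blast
  then show "\<exists>n. rotate n u = v"
    using blockword_rotate xs(1) ys(1) by metis
next
  fix u v assume "u \<in> A_set r m" "v \<in> A_set r m" and "\<exists>n. rotate n u = v"
  then show "bs_conj k u v"
    using bs_conj_rotate by blast
next
  fix w assume "w \<in> A_set r m"
  then obtain xs where "w = blockword xs" "length xs = m" "balanced r xs"
    by (rule A_setE)
  then show "conj_geodesic k w"
    using conj_geodesic_blockword[OF _ assms(2)] assms(3) by auto
qed

end
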